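(* Let $p$ be a prime, $q=p^l$, $m\ge1$, $n=2m$. For $0\leqslant r<n(q-1)$, $I\subseteq M_r$ and $\overline{I}=M_r\setminus I$, the dual code (with respect to the standard inner product on $\mathbb{F}_q^{q^n}$) satisfies $$\mathcal{C}_q(r,I,n)^\perp=\mathcal{C}_q(n(q-1)-r,\overline{I},n).$$
   Context: Let $N=q^n-1$ and $\alpha$ a primitive element of $\mathbb{F}_{q^n}$. Every integer $0\le u\le q^n-1$ is written $u=\sum_{i=0}^{n-1}u_iq^i$, $u_i\in\{0,\dots,q-1\}$; $\mathrm{wt}_q(u)=\sum u_i$, $O(u)=\sum_{i\text{ odd}}u_i$, $E(u)=\sum_{i\text{ even}}u_i$. For $-1\le r<n(q-1)$, $Z_r=\{\alpha^u\mid 0<u\le q^n-1,\ \mathrm{wt}_q(u)\le n(q-1)-r-1\}$. For $0\le r\le n(q-1)$ and integer $k\ge0$, $\Theta^{(r)}_k=\{\alpha^u\mid 0\le u\le q^n-1,\ \mathrm{wt}_q(u)=n(q-1)-r,\ |O(u)-E(u)|=k\}$. $M_r$ is the set of even (resp. odd) integers $k\in[0,m(q-1)]$ when $r$ is even (resp. odd). For $0\le r<n(q-1)$, $I\subseteq M_r$: $\overline I=M_r\setminus I$, $Z_{r,I}=Z_r\cup\bigcup_{k\in\overline I}\Theta^{(r)}_k$. A cyclic code of length $N$ over $\mathbb{F}_q$ with zero set $Z$ is $\{(c_0,\dots,c_{N-1})\in\mathbb{F}_q^N\mid \sum_ic_i\beta^i=0\ \forall\beta\in Z\}$, coordinate $i$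 labelled by $\alpha^i$. $\mathcal{C}_q(r,I,n)^*$ is the cyclic code with zero set $Z_{r,I}$ and $\mathcal{C}_q(r,I,n)$ its extended code (coordinates indexed by $\mathbb{F}_{q^n}$, extra coordinate labelled $0$ equal to $-\sum_ic_i$). The generalized Reed–Muller code $\mathcal{R}_q(r,n)$ ($-1\le r<n(q-1)$) is the extended code of the cyclic code with zero set $Z_r$, and $\mathcal{R}_q(n(q-1),n)=\mathbb{F}_q^{q^n}$. By convention, $\mathcal{C}_q(n(q-1),I,n)=\mathcal{R}_q(n(q-1)-1,n)$ if $0\notin I$ and $\mathcal{C}_q(n(q-1),I,n)=\mathbb{F}_q^{q^n}$ if $0\in I$. *)

theory Defs
  imports Main "HOL-Computational_Algebra.Primes"
begin

definition qdigit :: "nat \<Rightarrow> nat \<Rightarrow> nat \<Rightarrow> nat" where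
  "qdigit q u i = (u div q ^ i) mod q"

definition wtq :: "nat \<Rightarrow> nat \<Rightarrow> nat \<Rightarrow> nat" where
  "wtq q n u = (\<Sum>i<n. qdigit q u i)"

definition Osum :: "nat \<Rightarrow> nat \<Rightarrow> nat \<Rightarrow> nat" where
  "Osum q n u = (\<Sum>i\<in>{i. i < n \<and> odd i}. qdigit q u i)"

definition Esum :: "nat \<Rightarrow> nat \<Rightarrow> nat \<Rightarrow> nat" where
  "Esum q n u = (\<Sum>i\<in>{i. i < n \<and> even i}. qdigit q u i)"

definition Mset :: "nat \<Rightarrow> nat \<Rightarrow> nat \<Rightarrow> nat set" where
  "Mset q m r = {k. k \<le> m * (q - 1) \<and> (even k \<longleftrightarrow> even r)}"

text \<open>Z_r (for 0 <= r < n(q-1)); the condition wt <= n(q-1)-r-1 is written without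
  truncated subtraction.\<close>
definition Zset :: "nat \<Rightarrow> nat \<Rightarrow> 'a::field \<Rightarrow> nat \<Rightarrow> 'a set" where
  "Zset q n \<alpha> r = {\<alpha> ^ u | u. 0 < u \<and> u \<le> q ^ n - 1 \<and> wtq q n u + r + 1 \<le> n * (q - 1)}"

definition Theta :: "nat \<Rightarrow> nat \<Rightarrow> 'a::field \<Rightarrow> nat \<Rightarrow> nat \<Rightarrow> 'a set" where
  "Theta q n \<alpha> r k = {\<alpha> ^ u | u. u \<le> q ^ n - 1 \<and> wtq q n u + r = n * (q - 1)
      \<and> \<bar>int (Osum q n u) - int (Esum q n u)\<bar> = int k}"

definition ZrI :: "nat \<Rightarrow> nat \<Rightarrow> nat \<Rightarrow> 'a::field \<Rightarrow> nat \<Rightarrow> nat set \<Rightarrow> 'a set" where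
  "ZrI q m n \<alpha> r I = Zset q n \<alpha> r \<union> (\<Union>k\<in>Mset q m r - I. Theta q n \<alpha> r k)"

text \<open>The prime subfield F_q of the field 'a (of size q^n): the roots of x^q - x.\<close>
definition Fq :: "nat \<Rightarrow> 'a::field set" where
  "Fq q = {x. x ^ q = x}"

text \<open>Words of length q^n over F_q, coordinates indexed by the elements of F_{q^n}.\<close>
definition words :: "nat \<Rightarrow> ('a::field \<Rightarrow> 'a) set" where
  "words q = {c. \<forall>x. c x \<in> Fq q}"

text \<open>Extended code of the cyclic code of length N = q^n - 1 with zero set Z
  (coordinate i labelled alpha^i, extra coordinate labelled 0).\<close>
definition ext_cyclic :: "nat \<Rightarrow> nat \<Rightarrow> 'a::field \<Rightarrow> 'a set \<Rightarrow> ('a \<Rightarrow> 'a) set" where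
  "ext_cyclic q n \<alpha> Z = {c \<in> words q.
      (\<forall>\<beta>\<in>Z. (\<Sum>i<q ^ n - 1. c (\<alpha> ^ i) * \<beta> ^ i) = 0)
      \<and> c 0 = - (\<Sum>i<q ^ n - 1. c (\<alpha> ^ i))}"

definition GRM :: "nat \<Rightarrow> nat \<Rightarrow> 'a::field \<Rightarrow> int \<Rightarrow> ('a \<Rightarrow> 'a) set" where
  "GRM q n \<alpha> r = (if r = int (n * (q - 1)) then words q
     else ext_cyclic q n \<alpha> {\<alpha> ^ u | u. 0 < u \<and> u \<le> q ^ n - 1 \<and> int (wtq q n u) \<le> int (n * (q - 1)) - r - 1})"

definition Ccode :: "nat \<Rightarrow> nat \<Rightarrow> 'a::field \<Rightarrow> nat \<Rightarrow> nat set \<Rightarrow> ('a \<Rightarrow> 'a) set" where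
  "Ccode q m \<alpha> r I = (let n = 2 * m in
     if r = n * (q - 1) then
       (if 0 \<in> I then words q else GRM q n \<alpha> (int (n * (q - 1)) - 1))
     else ext_cyclic q n \<alpha> (ZrI q m n \<alpha> r I))"

definition dual_code :: "nat \<Rightarrow> ('a::{field,finite} \<Rightarrow> 'a) set \<Rightarrow> ('a \<Rightarrow> 'a) set" where
  "dual_code q C = {d \<in> words q. \<forall>c\<in>C. (\<Sum>x\<in>UNIV. c x * d x) = 0}"

definition primitive_elem :: "'a::field \<Rightarrow> bool" where
  "primitive_elem \<alpha> \<longleftrightarrow> (\<forall>x. x \<noteq> 0 \<longrightarrow> (\<exists>i. x = \<alpha> ^ i))"

end

theory Submission
  imports Defs "HOL-Computational_Algebra.Polynomial"
begin

text \<open>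
  Describe a word \<open>c\<close> on the field of order \<open>q ^ n\<close> by its moments \<open>\<Sum>x. c x * x ^ u\<close>.
  The extended cyclic code with zeros \<open>\<alpha> ^ u\<close> (\<open>u \<in> U\<close>) is the set of \<open>F_q\<close>-words whose
  moments vanish on \<open>T = U \<union> {0}\<close>. If \<open>T\<close> is closed under multiplication by \<open>q\<close> modulo
  \<open>N = q ^ n - 1\<close>, the dual code is of the same kind, with exponents \<open>{s \<le> N. N - s \<notin> T}\<close>:
  one inclusion comes from writing the inner product of two words through their moments
  (interpolation on the field), the other from pairing with the trace words
  \<open>x \<mapsto> Tr (a * x ^ k)\<close>, whose moments vanish on \<open>T\<close> exactly when \<open>k\<close> is a dual exponent.

  The exponents of the zeros of \<open>C_q(r, I, n)\<close> are described by the digit weight and the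
  imbalance \<open>|O - E|\<close> of the base-\<open>q\<close> digits. Multiplication by \<open>q\<close> modulo \<open>N\<close> rotates the
  digits, which preserves the weight and, \<open>n\<close> being even, the imbalance; so the exponent set
  is closed. The complement \<open>s \<mapsto> N - s\<close> replaces each digit \<open>d\<close> by \<open>q - 1 - d\<close>, which
  turns the weight \<open>w\<close> into \<open>n * (q - 1) - w\<close> and keeps the imbalance; this identifies the
  dual exponent set with that of \<open>C_q(n * (q - 1) - r, M_r - I, n)\<close>.
\<close>

section \<open>Base-\<open>q\<close> digits\<close>

lemma qdigit_less: "0 < q \<Longrightarrow> qdigit q u i < q"
  by (simp add: qdigit_def)

lemma qdigit_0: "qdigit q u 0 = u mod q"
  by (simp add: qdigit_def)

lemma qdigit_Suc: "qdigit q u (Suc i) = qdigit q (u div q) i"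
  by (simp add: qdigit_def div_mult2_eq)

lemma qdigit_expansion: "0 < q \<Longrightarrow> u < q ^ n \<Longrightarrow> (\<Sum>i<n. qdigit q u i * q ^ i) = u"
proof (induction n arbitrary: u)
  case (Suc n)
  have "u div q < q ^ n"
    using Suc.prems by (simp add: div_less_iff_less_mult mult.commute)
  then have IH: "(\<Sum>i<n. qdigit q (u div q) i * q ^ i) = u div q"
    using Suc.IH Suc.prems(1) by blast
  have "(\<Sum>i<Suc n. qdigit q u i * q ^ i) = u mod q + q * (\<Sum>i<n. qdigit q (u div q) i * q ^ i)"
    unfolding sum.lessThan_Suc_shift by (simp add: qdigit_Suc qdigit_0 sum_distrib_left mult_ac)
  then show ?case
    by (simp add: IH)
qed simp

lemma qdigit_of_expansion:
  assumes "\<forall>i<n. f i < q" and "j < n"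
  shows "qdigit q (\<Sum>i<n. f i * q ^ i) j = f j"
  using assms
proof (induction n arbitrary: f j)
  case (Suc n)
  have split: "(\<Sum>i<Suc n. f i * q ^ i) = f 0 + q * (\<Sum>i<n. f (Suc i) * q ^ i)"
    unfolding sum.lessThan_Suc_shift by (simp add: sum_distrib_left mult_ac)
  have "0 < q"
    using Suc.prems by auto
  show ?case
  proof (cases j)
    case 0
    then show ?thesis
      using Suc.prems by (simp only: split qdigit_0) simp
  next
    case (Suc j')
    then show ?thesis
      using Suc.prems Suc.IH[of "\<lambda>i. f (Suc i)" j'] \<open>0 < q\<close>
      by (simp only: split qdigit_Suc) simp
  qed
qed simp

lemma sum_max_qdigits: "(\<Sum>i<n. (q - 1) * q ^ i) = q ^ n - (1::nat)"
proof (induction n)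
  case (Suc n)
  show ?case
  proof (cases "q = 0")
    case False
    then have "q ^ n - 1 + (q - 1) * q ^ n = q * q ^ n - 1"
      by (simp add: algebra_simps diff_mult_distrib Suc_le_eq)
    then show ?thesis
      using Suc by simp
  qed (cases n; simp)
qed simp

lemma qexpansion_le: "\<forall>i<n. f i < q \<Longrightarrow> (\<Sum>i<n. f i * q ^ i) \<le> q ^ n - (1::nat)"
  unfolding sum_max_qdigits[symmetric] by (intro sum_mono mult_right_mono) auto

lemma qdigit_complement:
  assumes q: "0 < q" and u: "u \<le> q ^ n - 1" and i: "i < n"
  shows "qdigit q (q ^ n - 1 - u) i = q - 1 - qdigit q u i"
proof -
  have "u < q ^ n"
    using u q by (metis One_nat_def Suc_pred le_imp_less_Suc zero_less_power)
  have "(q - 1 - qdigit q u i) * q ^ i + qdigit q u i * q ^ i = (q - 1) * q ^ i" for i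
    using qdigit_less[OF q, of u i] by (simp flip: add_mult_distrib)
  then have "(\<Sum>i<n. (q - 1 - qdigit q u i) * q ^ i) + (\<Sum>i<n. qdigit q u i * q ^ i)
      = (\<Sum>i<n. (q - 1) * q ^ i)"
    by (simp only: sum.distrib[symmetric])
  then have "(\<Sum>i<n. (q - 1 - qdigit q u i) * q ^ i) + u = q ^ n - 1"
    by (simp only: qdigit_expansion[OF q \<open>u < q ^ n\<close>] sum_max_qdigits)
  then have "q ^ n - 1 - u = (\<Sum>i<n. (q - 1 - qdigit q u i) * q ^ i)"
    by simp
  then show ?thesis
    using i q by (simp add: qdigit_of_expansion)
qed

lemma qdigit_le: "0 < q \<Longrightarrow> qdigit q u i \<le> q - 1"
  using qdigit_less[of q u i] by linarith

lemma sum_qdigits_le: "0 < q \<Longrightarrow> (\<Sum>i\<in>A. qdigit q u i) \<le> card A * (q - 1)"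
  using sum_bounded_above[of A "qdigit q u" "q - 1"] qdigit_le[of q u] by simp

lemma sum_qdigits_complement:
  assumes q: "0 < q" and u: "u \<le> q ^ n - 1" and A: "A \<subseteq> {..<n}"
  shows "(\<Sum>i\<in>A. qdigit q (q ^ n - 1 - u) i) = card A * (q - 1) - (\<Sum>i\<in>A. qdigit q u i)"
proof -
  have "(\<Sum>i\<in>A. qdigit q (q ^ n - 1 - u) i) = (\<Sum>i\<in>A. (q - 1) - qdigit q u i)"
    using A qdigit_complement[OF q u] by (intro sum.cong) auto
  also have "\<dots> = card A * (q - 1) - (\<Sum>i\<in>A. qdigit q u i)"
    using qdigit_le[OF q, of u] by (subst sum_subtractf_nat) auto
  finally show ?thesis .
qed

lemma wtq_0 [simp]: "wtq q n 0 = 0"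
  by (simp add: wtq_def qdigit_def)

lemma wtq_le: "0 < q \<Longrightarrow> wtq q n u \<le> n * (q - 1)"
  using sum_qdigits_le[where A = "{..<n}"] by (simp add: wtq_def)

lemma wtq_complement:
  "0 < q \<Longrightarrow> u \<le> q ^ n - 1 \<Longrightarrow> wtq q n (q ^ n - 1 - u) = n * (q - 1) - wtq q n u"
  using sum_qdigits_complement[of q u n "{..<n}"] by (simp add: wtq_def)

lemma wtq_max: "0 < q \<Longrightarrow> wtq q n (q ^ n - 1) = n * (q - 1)"
  using wtq_complement[of q 0 n] by simp

lemma wtq_eq_0_iff:
  assumes "0 < q" and "u < q ^ n"
  shows "wtq q n u = 0 \<longleftrightarrow> u = 0"
proof
  assume "wtq q n u = 0"
  then have "\<forall>i<n. qdigit q u i = 0"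
    by (simp add: wtq_def)
  then have "(\<Sum>i<n. qdigit q u i * q ^ i) = 0"
    by simp
  then show "u = 0"
    by (simp only: qdigit_expansion[OF assms])
qed simp

lemma wtq_eq_max_iff:
  assumes q: "0 < q" and u: "u \<le> q ^ n - 1"
  shows "wtq q n u = n * (q - 1) \<longleftrightarrow> u = q ^ n - 1"
proof
  assume "wtq q n u = n * (q - 1)"
  then have "wtq q n (q ^ n - 1 - u) = 0"
    using wtq_complement[OF q u] by simp
  moreover have "q ^ n - 1 - u < q ^ n"
    using q by simp
  ultimately have "q ^ n - 1 - u = 0"
    using wtq_eq_0_iff[OF q] by blast
  then show "u = q ^ n - 1"
    using u by simp
next
  assume "u = q ^ n - 1"
  then show "wtq q n u = n * (q - 1)"
    by (simp only: wtq_max[OF q])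
qed

lemma odd_indices: "{i. i < 2 * m \<and> odd i} = (\<lambda>j::nat. 2 * j + 1) ` {..<m}"
  by (auto elim!: oddE)

lemma even_indices: "{i. i < 2 * m \<and> even i} = (\<lambda>j::nat. 2 * j) ` {..<m}"
  by (auto elim!: evenE)

lemma card_odd_indices: "card {i. i < 2 * m \<and> odd i} = m"
  unfolding odd_indices by (simp add: card_image inj_on_def)

lemma card_even_indices: "card {i. i < 2 * m \<and> even i} = m"
  unfolding even_indices by (simp add: card_image inj_on_def)

lemma Osum_eq_sum: "Osum q (2 * m) u = (\<Sum>j<m. qdigit q u (2 * j + 1))"
  unfolding Osum_def odd_indices by (simp add: sum.reindex inj_on_def)

lemma Esum_eq_sum: "Esum q (2 * m) u = (\<Sum>j<m. qdigit q u (2 * j))"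
  unfolding Esum_def even_indices by (simp add: sum.reindex inj_on_def)

lemma wtq_eq_Osum_Esum: "wtq q (2 * m) u = Osum q (2 * m) u + Esum q (2 * m) u"
proof -
  have "(\<Sum>i<2 * m. f i) = (\<Sum>j<m. f (2 * j) + f (2 * j + 1))" for f :: "nat \<Rightarrow> nat"
    by (induction m) (simp_all add: algebra_simps)
  then show ?thesis
    by (simp add: wtq_def Osum_eq_sum Esum_eq_sum sum.distrib)
qed

lemma Osum_le: "0 < q \<Longrightarrow> Osum q (2 * m) u \<le> m * (q - 1)"
  using sum_qdigits_le[where A = "{i. i < 2 * m \<and> odd i}"] by (simp add: Osum_def card_odd_indices)

lemma Esum_le: "0 < q \<Longrightarrow> Esum q (2 * m) u \<le> m * (q - 1)"
  using sum_qdigits_le[where A = "{i. i < 2 * m \<and> even i}"] by (simp add: Esum_def card_even_indices)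

lemma Osum_complement:
  "0 < q \<Longrightarrow> u \<le> q ^ (2 * m) - 1 \<Longrightarrow>
    Osum q (2 * m) (q ^ (2 * m) - 1 - u) = m * (q - 1) - Osum q (2 * m) u"
  using sum_qdigits_complement[of q u "2 * m" "{i. i < 2 * m \<and> odd i}"]
  by (auto simp: Osum_def card_odd_indices)

lemma Esum_complement:
  "0 < q \<Longrightarrow> u \<le> q ^ (2 * m) - 1 \<Longrightarrow>
    Esum q (2 * m) (q ^ (2 * m) - 1 - u) = m * (q - 1) - Esum q (2 * m) u"
  using sum_qdigits_complement[of q u "2 * m" "{i. i < 2 * m \<and> even i}"]
  by (auto simp: Esum_def card_even_indices)

definition digit_imbalance :: "nat \<Rightarrow> nat \<Rightarrow> nat \<Rightarrow> nat" where
  "digit_imbalance q n u = nat \<bar>int (Osum q n u) - int (Esum q n u)\<bar>"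

lemma digit_imbalance_complement:
  assumes "0 < q" and "u \<le> q ^ (2 * m) - 1"
  shows "digit_imbalance q (2 * m) (q ^ (2 * m) - 1 - u) = digit_imbalance q (2 * m) u"
  using Osum_le[OF assms(1), of m u] Esum_le[OF assms(1), of m u]
  unfolding digit_imbalance_def Osum_complement[OF assms] Esum_complement[OF assms]
  by (simp add: of_nat_diff abs_minus_commute)

lemma digit_imbalance_max: "0 < q \<Longrightarrow> digit_imbalance q (2 * m) (q ^ (2 * m) - 1) = 0"
  using digit_imbalance_complement[of q 0 m]
  by (simp add: digit_imbalance_def Osum_def Esum_def qdigit_def)

lemma digit_imbalance_in_Mset:
  assumes "0 < q"
  shows "digit_imbalance q (2 * m) u \<in> Mset q m (wtq q (2 * m) u)"
proof -
  define a b where "a = Osum q (2 * m) u" and "b = Esum q (2 * m) u"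
  have "a \<le> m * (q - 1)" "b \<le> m * (q - 1)"
    using Osum_le Esum_le assms by (auto simp: a_def b_def)
  moreover have "digit_imbalance q (2 * m) u = (if a \<le> b then b - a else a - b)"
    by (simp add: digit_imbalance_def a_def b_def nat_diff_distrib)
  moreover have "wtq q (2 * m) u = a + b"
    by (simp add: wtq_eq_Osum_Esum a_def b_def)
  ultimately show ?thesis
    unfolding Mset_def by (auto; presburger)
qed

lemma Mset_complement: "r \<le> 2 * m * (q - 1) \<Longrightarrow> Mset q m (2 * m * (q - 1) - r) = Mset q m r"
  unfolding Mset_def by auto

section \<open>Multiplication by \<open>q\<close> as a rotation of digits\<close>

definition qrot :: "nat \<Rightarrow> nat \<Rightarrow> nat \<Rightarrow> nat" where
  "qrot q n u = (\<Sum>i<n. qdigit q u (if i = 0 then n - 1 else i - 1) * q ^ i)"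

lemma qdigit_qrot:
  "0 < q \<Longrightarrow> i < n \<Longrightarrow> qdigit q (qrot q n u) i = qdigit q u (if i = 0 then n - 1 else i - 1)"
  unfolding qrot_def by (rule qdigit_of_expansion) (auto simp: qdigit_less)

lemma qrot_le: "0 < q \<Longrightarrow> qrot q n u \<le> q ^ n - 1"
  unfolding qrot_def by (rule qexpansion_le) (auto simp: qdigit_less)

lemma wtq_qrot:
  assumes q: "0 < q" and n: "0 < n"
  shows "wtq q n (qrot q n u) = wtq q n u"
proof -
  obtain n' where n': "n = Suc n'"
    using n by (cases n) auto
  have "wtq q n (qrot q n u) = (\<Sum>i<Suc n'. qdigit q u (if i = 0 then n' else i - 1))"
    unfolding wtq_def n' by (intro sum.cong refl) (simp add: qdigit_qrot[OF q])
  also have "\<dots> = qdigit q u n' + (\<Sum>i<n'. qdigit q u i)"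
    by (simp only: sum.lessThan_Suc_shift) simp
  also have "\<dots> = wtq q n u"
    unfolding wtq_def n' by (simp add: sum.lessThan_Suc)
  finally show ?thesis .
qed

lemma Osum_qrot: "0 < q \<Longrightarrow> Osum q (2 * m) (qrot q (2 * m) u) = Esum q (2 * m) u"
  unfolding Osum_eq_sum Esum_eq_sum by (intro sum.cong refl) (simp add: qdigit_qrot)

lemma Esum_qrot:
  assumes q: "0 < q" and m: "0 < m"
  shows "Esum q (2 * m) (qrot q (2 * m) u) = Osum q (2 * m) u"
proof -
  obtain m' where m': "m = Suc m'"
    using m by (cases m) auto
  have "Esum q (2 * m) (qrot q (2 * m) u)
      = (\<Sum>j<Suc m'. qdigit q u (if j = 0 then 2 * m' + 1 else 2 * j - 1))"
    unfolding Esum_eq_sum using qdigit_qrot[OF q, of _ "2 * m" u] m' by (intro sum.cong) auto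
  also have "\<dots> = qdigit q u (2 * m' + 1) + (\<Sum>j<m'. qdigit q u (2 * j + 1))"
    by (simp only: sum.lessThan_Suc_shift) simp
  also have "\<dots> = Osum q (2 * m) u"
    unfolding Osum_eq_sum m' by simp
  finally show ?thesis .
qed

lemma digit_imbalance_qrot:
  "0 < q \<Longrightarrow> 0 < m \<Longrightarrow> digit_imbalance q (2 * m) (qrot q (2 * m) u) = digit_imbalance q (2 * m) u"
  unfolding digit_imbalance_def using Osum_qrot Esum_qrot by (simp add: abs_minus_commute)

lemma mult_q_eq_qrot:
  assumes q: "0 < q" and n: "0 < n" and u: "u < q ^ n"
  shows "u * q = qrot q n u + qdigit q u (n - 1) * (q ^ n - 1)"
proof -
  obtain n' where n': "n = Suc n'"
    using n by (cases n) auto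
  let ?d = "qdigit q u"
  have "u * q = (\<Sum>i<Suc n'. ?d i * q ^ i) * q"
    using qdigit_expansion[OF q u] n' by simp
  also have "\<dots> = (\<Sum>i<n'. ?d i * q ^ Suc i) + ?d n' * q ^ n"
    by (simp add: n' sum_distrib_left distrib_left mult_ac)
  finally have "u * q = (\<Sum>i<n'. ?d i * q ^ Suc i) + ?d n' * q ^ n" .
  moreover have "qrot q n u = ?d n' + (\<Sum>i<n'. ?d i * q ^ Suc i)"
    unfolding qrot_def n' sum.lessThan_Suc_shift by simp
  moreover have "?d n' * q ^ n = ?d n' + ?d n' * (q ^ n - 1)"
    using q by (simp add: diff_mult_distrib2)
  ultimately show ?thesis
    using n' by simp
qed

lemma qrot_eq_mult_mod:
  assumes q: "0 < q" and n: "0 < n" and u: "u < q ^ n - 1"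
  shows "qrot q n u = u * q mod (q ^ n - 1)"
proof -
  have "qrot q n u \<noteq> q ^ n - 1"
  proof
    assume "qrot q n u = q ^ n - 1"
    then have "wtq q n u = n * (q - 1)"
      using wtq_qrot[OF q n, of u] wtq_max[OF q] by simp
    then show False
      using wtq_eq_max_iff[OF q less_imp_le[OF u]] u by simp
  qed
  then have "qrot q n u < q ^ n - 1"
    using qrot_le[OF q] le_neq_implies_less by blast
  moreover have "u * q = qrot q n u + qdigit q u (n - 1) * (q ^ n - 1)"
    using u by (intro mult_q_eq_qrot[OF q n]) simp
  ultimately show ?thesis
    by simp
qed

lemma mult_power_mod_eq_qrot_funpow:
  assumes q: "0 < q" and n: "0 < n" and u: "u < q ^ n - 1"
  shows "u * q ^ t mod (q ^ n - 1) = (qrot q n ^^ t) u"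
proof (induction t)
  case (Suc t)
  have "u * q ^ Suc t mod (q ^ n - 1) = (u * q ^ t mod (q ^ n - 1)) * q mod (q ^ n - 1)"
    by (simp only: power_Suc2 mult.assoc[symmetric] mod_mult_left_eq)
  also have "\<dots> = qrot q n (u * q ^ t mod (q ^ n - 1))"
    using u by (intro qrot_eq_mult_mod[OF q n, symmetric]) simp
  finally show ?case
    using Suc.IH by simp
qed (use u in simp)

lemma wtq_qrot_funpow: "0 < q \<Longrightarrow> 0 < n \<Longrightarrow> wtq q n ((qrot q n ^^ t) u) = wtq q n u"
  by (induction t) (simp_all add: wtq_qrot)

lemma digit_imbalance_qrot_funpow:
  "0 < q \<Longrightarrow> 0 < m \<Longrightarrow>
    digit_imbalance q (2 * m) ((qrot q (2 * m) ^^ t) u) = digit_imbalance q (2 * m) u"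
  by (induction t) (simp_all add: digit_imbalance_qrot)

lemma dvd_add_imp_eq_diff:
  fixes N k b :: nat
  assumes "N dvd k + b" and "0 < k" and "k \<le> N" and "b < N"
  shows "b = N - k"
proof -
  obtain c where c: "k + b = N * c"
    using assms(1) ..
  then have "N * c < N * 2"
    using assms(3,4) by linarith
  moreover have "c \<noteq> 0"
    using c assms(2) by (cases c) auto
  ultimately have "c = 1"
    by simp
  then show ?thesis
    using c by simp
qed

section \<open>The field of order \<open>q ^ n\<close>\<close>

lemma CHAR_eq_of_card_prime_power:
  fixes p k :: nat
  assumes p: "prime p" and k: "0 < k" and card: "card (UNIV :: 'a::{field,finite} set) = p ^ k"
  shows "CHAR('a) = p"
proof -
  have prime_char: "prime CHAR('a)"
    by (rule prime_CHAR_semidom) (simp add: finite_imp_CHAR_pos)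
  have "(\<Sum>x\<in>UNIV. x) = (\<Sum>x\<in>UNIV. x + (1::'a))"
    by (rule sum.reindex_bij_witness[of _ "\<lambda>y. y + 1" "\<lambda>y. y - 1"]) auto
  then have "of_nat (card (UNIV :: 'a set)) = (0::'a)"
    by (simp add: sum.distrib)
  then have "CHAR('a) dvd p ^ k"
    using card of_nat_eq_0_iff_char_dvd by metis
  then have "CHAR('a) dvd p"
    using prime_char prime_dvd_power by blast
  then show ?thesis
    using prime_char p primes_dvd_imp_eq by blast
qed

lemma primitive_elem_nonzero:
  fixes \<alpha> :: "'a::{field,finite}"
  assumes card: "2 < card (UNIV :: 'a set)" and "primitive_elem \<alpha>"
  shows "\<alpha> \<noteq> 0"
proof
  assume "\<alpha> = 0"
  have "x \<in> {0, 1}" for x :: 'a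
  proof (cases "x = 0")
    case False
    then obtain i where "x = \<alpha> ^ i"
      using \<open>primitive_elem \<alpha>\<close> unfolding primitive_elem_def by blast
    then show ?thesis
      using \<open>\<alpha> = 0\<close> by (simp add: power_0_left)
  qed simp
  then have "UNIV \<subseteq> {0, 1::'a}"
    by blast
  then have "card (UNIV :: 'a set) \<le> card {0, 1::'a}"
    by (intro card_mono) auto
  also have "\<dots> \<le> 2"
    by (rule card_insert_le_m1) auto
  finally show False
    using card by simp
qed

locale primitive_extension =
  fixes q n :: nat and \<alpha> :: "'a::{field,finite}"
  assumes card_UNIV: "card (UNIV :: 'a set) = q ^ n"
    and q_char_power: "\<exists>l>0. q = CHAR('a) ^ l"
    and n_pos: "0 < n"
    and primitive: "primitive_elem \<alpha>"
    and alpha_nonzero: "\<alpha> \<noteq> 0"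
begin

definition N :: nat where "N = q ^ n - 1"

lemma prime_CHAR: "prime CHAR('a)"
  by (rule prime_CHAR_semidom) (simp add: finite_imp_CHAR_pos)

lemma q_gt_1: "1 < q"
  using q_char_power one_less_power[OF prime_gt_1_nat[OF prime_CHAR]] by auto

lemma q_pos: "0 < q"
  using q_gt_1 by simp

lemma of_nat_q: "of_nat q = (0::'a)"
  using q_char_power by (auto simp: of_nat_eq_0_iff_char_dvd)

lemma power_q_power_sum: "(\<Sum>i\<in>A. f i) ^ (q ^ t) = (\<Sum>i\<in>A. f i ^ (q ^ t) :: 'a)"
proof -
  obtain l where "q = CHAR('a) ^ l"
    using q_char_power by blast
  then have "q ^ t = CHAR('a) ^ (l * t)"
    by (simp add: power_mult)
  then show ?thesis
    by (rule freshmans_dream_sum'[OF prime_CHAR])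
qed

lemma N_pos: "0 < N"
  using one_less_power[OF q_gt_1 n_pos] by (simp add: N_def)

lemma Suc_N: "Suc N = q ^ n"
  using N_pos by (simp add: N_def)

lemma of_nat_N: "of_nat N = (-1::'a)"
proof -
  have "of_nat (Suc N) = (0::'a)"
    using of_nat_q n_pos by (simp only: Suc_N of_nat_power) (simp add: power_0_left)
  then show ?thesis
    by (simp only: of_nat_Suc eq_neg_iff_add_eq_0 add.commute)
qed

lemma power_N: assumes "(x::'a) \<noteq> 0" shows "x ^ N = 1"
proof -
  have "(\<Prod>y\<in>UNIV - {0}. x * y) = x ^ card (UNIV - {0::'a}) * \<Prod>(UNIV - {0::'a})"
    by (simp add: prod.distrib)
  also have "(\<Prod>y\<in>UNIV - {0}. x * y) = \<Prod>(UNIV - {0::'a})"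
    by (rule prod.reindex_bij_witness[of _ "\<lambda>y. y / x" "\<lambda>y. x * y"]) (use assms in auto)
  finally have "x ^ N * \<Prod>(UNIV - {0::'a}) = \<Prod>(UNIV - {0::'a})"
    by (simp add: card_Diff_singleton card_UNIV N_def)
  moreover have "\<Prod>(UNIV - {0::'a}) \<noteq> 0"
    by (simp add: prod_zero_iff)
  ultimately show ?thesis
    by simp
qed

lemma power_q_power_n: "(x::'a) ^ (q ^ n) = x"
proof -
  have "x ^ (q ^ n) = x * x ^ N"
    by (metis Suc_N power_Suc)
  then show ?thesis
    using power_N[of x] by (cases "x = 0") auto
qed

lemma alpha_power_mod_N: "\<alpha> ^ (i mod N) = \<alpha> ^ i"
proof -
  have "\<alpha> ^ i = \<alpha> ^ (N * (i div N) + i mod N)"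
    by simp
  also have "\<dots> = \<alpha> ^ (i mod N)"
    by (simp only: power_add power_mult power_N[OF alpha_nonzero] power_one mult_1)
  finally show ?thesis ..
qed

lemma bij_betw_alpha_powers: "bij_betw (\<lambda>i. \<alpha> ^ i) {..<N} (UNIV - {0})"
proof -
  have "(\<lambda>i. \<alpha> ^ i) ` {..<N} = UNIV - {0}"
  proof
    show "UNIV - {0} \<subseteq> (\<lambda>i. \<alpha> ^ i) ` {..<N}"
    proof
      fix x :: 'a assume "x \<in> UNIV - {0}"
      then obtain i where "x = \<alpha> ^ (i mod N)"
        using primitive alpha_power_mod_N unfolding primitive_elem_def by auto
      then show "x \<in> (\<lambda>i. \<alpha> ^ i) ` {..<N}"
        using N_pos by auto
    qed
  qed (use alpha_nonzero in auto)
  moreover have "card (UNIV - {0::'a}) = card {..<N}"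
    by (simp add: card_Diff_singleton card_UNIV N_def)
  ultimately show ?thesis
    by (simp add: bij_betw_def eq_card_imp_inj_on)
qed

lemma sum_alpha_powers: "(\<Sum>i<N. f (\<alpha> ^ i)) = (\<Sum>x\<in>UNIV - {0::'a}. f x)"
  using sum.reindex_bij_betw[OF bij_betw_alpha_powers, of f] .

lemma alpha_power_eq_1_iff: "\<alpha> ^ e = 1 \<longleftrightarrow> N dvd e"
proof
  assume "\<alpha> ^ e = 1"
  then have "\<alpha> ^ (e mod N) = \<alpha> ^ 0"
    using alpha_power_mod_N[of e] by simp
  then have "e mod N = 0"
    using bij_betw_alpha_powers N_pos unfolding bij_betw_def inj_on_def by simp
  then show "N dvd e"
    by auto
next
  assume "N dvd e"
  then obtain k where "e = N * k" ..
  then show "\<alpha> ^ e = 1"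
    by (simp only: power_mult power_N[OF alpha_nonzero] power_one)
qed

lemma sum_powers: "(\<Sum>x\<in>UNIV. x ^ e :: 'a) = (if 0 < e \<and> N dvd e then -1 else 0)"
proof (cases "0 < e \<and> N dvd e")
  case True
  then obtain k where "e = N * k"
    by blast
  then have power_e: "x ^ e = (if x = 0 then 0 else 1)" for x :: 'a
    using True by (simp add: power_mult power_N)
  have "(\<Sum>x\<in>UNIV. x ^ e :: 'a) = (\<Sum>x\<in>UNIV. 1 - (if x = (0::'a) then 1 else 0))"
    by (intro sum.cong) (simp_all add: power_e)
  also have "\<dots> = of_nat (card (UNIV :: 'a set)) - 1"
    by (simp add: sum_subtractf)
  also have "\<dots> = -1"
    using of_nat_q n_pos by (simp add: card_UNIV of_nat_power power_0_left)
  finally show ?thesis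
    using True by simp
next
  case False
  show ?thesis
  proof (cases "e = 0")
    case True
    then show ?thesis
      using of_nat_q n_pos by (simp add: card_UNIV of_nat_power power_0_left)
  next
    case e: False
    have "(\<Sum>x\<in>UNIV. x ^ e :: 'a) = (\<Sum>x\<in>UNIV. (\<alpha> * x) ^ e)"
      by (rule sum.reindex_bij_witness[of _ "\<lambda>y. \<alpha> * y" "\<lambda>y. y / \<alpha>"]) (use alpha_nonzero in auto)
    also have "\<dots> = \<alpha> ^ e * (\<Sum>x\<in>UNIV. x ^ e)"
      by (simp add: power_mult_distrib sum_distrib_left)
    finally have "(1 - \<alpha> ^ e) * (\<Sum>x\<in>UNIV. x ^ e) = 0"
      by (simp add: algebra_simps)
    moreover have "\<alpha> ^ e \<noteq> 1"
      using False e alpha_power_eq_1_iff by simp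
    ultimately show ?thesis
      using False by simp
  qed
qed

lemma Fq_power: "(x::'a) \<in> Fq q \<Longrightarrow> x ^ (q ^ t) = x"
proof (induction t)
  case (Suc t)
  have "x ^ (q ^ Suc t) = (x ^ q) ^ (q ^ t)"
    by (simp only: power_Suc power_mult)
  then show ?case
    using Suc by (simp add: Fq_def)
qed simp

definition trace :: "'a \<Rightarrow> 'a" where
  "trace y = (\<Sum>t<n. y ^ (q ^ t))"

lemma trace_in_Fq: "trace y \<in> Fq q"
proof -
  have "trace y ^ q = (\<Sum>t<n. y ^ (q ^ Suc t))"
    using power_q_power_sum[of "\<lambda>t. y ^ (q ^ t)" "{..<n}" 1]
    by (simp add: trace_def mult.commute flip: power_mult)
  also have "\<dots> = (\<Sum>t<Suc n. y ^ (q ^ t)) - y"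
    by (simp only: sum.lessThan_Suc_shift) simp
  also have "\<dots> = trace y"
    by (simp add: trace_def power_q_power_n)
  finally show ?thesis
    by (simp add: Fq_def)
qed

text \<open>The trace is a polynomial of degree \<open>q ^ (n - 1)\<close>, smaller than the field size.\<close>
lemma trace_nonzero: "\<exists>y. trace y \<noteq> 0"
proof (rule ccontr)
  assume "\<not> (\<exists>y. trace y \<noteq> 0)"
  define P :: "'a poly" where "P = (\<Sum>t<n. monom 1 (q ^ t))"
  have "poly P y = trace y" for y
    by (simp add: P_def trace_def poly_sum poly_monom)
  then have roots: "{x. poly P x = 0} = UNIV"
    using \<open>\<not> (\<exists>y. trace y \<noteq> 0)\<close> by auto
  have "coeff P (q ^ (n - 1)) = 1"
    using n_pos q_gt_1 by (simp add: P_def coeff_sum coeff_monom power_inject_exp)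
  then have "P \<noteq> 0"
    by auto
  have "degree P \<le> q ^ (n - 1)"
    unfolding P_def
    by (rule degree_sum_le) (use q_gt_1 n_pos in \<open>auto simp: degree_monom_eq intro: power_increasing\<close>)
  moreover have "q ^ (n - 1) < q ^ n"
    using q_gt_1 n_pos by (intro power_strict_increasing) auto
  ultimately show False
    using card_poly_roots_bound[OF \<open>P \<noteq> 0\<close>] roots card_UNIV by simp
qed

section \<open>Codes defined by vanishing moments\<close>

definition moment :: "('a \<Rightarrow> 'a) \<Rightarrow> nat \<Rightarrow> 'a" where
  "moment c u = (\<Sum>x\<in>UNIV. c x * x ^ u)"

definition moment_code :: "nat set \<Rightarrow> ('a \<Rightarrow> 'a) set" where
  "moment_code T = {c \<in> words q. \<forall>u\<in>T. moment c u = 0}"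

definition dual_exponents :: "nat set \<Rightarrow> nat set" where
  "dual_exponents T = {s. s \<le> N \<and> N - s \<notin> T}"

lemma moment_0: "moment c 0 = c 0 + (\<Sum>i<N. c (\<alpha> ^ i))"
  unfolding moment_def sum_alpha_powers by (simp add: sum.remove[of UNIV 0])

lemma moment_pos: "0 < u \<Longrightarrow> moment c u = (\<Sum>i<N. c (\<alpha> ^ i) * (\<alpha> ^ u) ^ i)"
  unfolding moment_def
  by (simp add: sum.remove[of UNIV 0] sum_alpha_powers[of "\<lambda>x. c x * x ^ u", symmetric]
      flip: power_mult mult.commute)

lemma moment_N: "moment c N = moment c 0 - c 0"
proof -
  have "moment c N = (\<Sum>x\<in>UNIV - {0}. c x)"
    unfolding moment_def using N_pos by (simp add: sum.remove[of UNIV 0] power_N)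
  then show ?thesis
    unfolding moment_def by (simp add: sum.remove[of UNIV 0])
qed

lemma ext_cyclic_eq_moment_code:
  assumes "\<forall>u\<in>U. 0 < u"
  shows "ext_cyclic q n \<alpha> ((\<lambda>u. \<alpha> ^ u) ` U) = moment_code (insert 0 U)"
  unfolding ext_cyclic_def moment_code_def N_def[symmetric]
  using assms by (auto simp: moment_pos moment_0 eq_neg_iff_add_eq_0)

lemma sum_power_Suc_root_of_unity:
  assumes "(z::'a) ^ N = 1"
  shows "(\<Sum>j<N. z ^ Suc j) = (if z = 1 then -1 else 0)"
proof (cases "z = 1")
  case True
  then show ?thesis
    using of_nat_N by simp
next
  case False
  have "(\<Sum>j<N. z ^ Suc j) = z * (\<Sum>j<N. z ^ j)"
    by (simp add: sum_distrib_left)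
  also have "(\<Sum>j<N. z ^ j) = (1 - z ^ N) / (1 - z)"
    using False by (simp add: sum_gp_strict)
  finally show ?thesis
    using assms False by simp
qed

lemma sum_power_kernel:
  "(\<Sum>j<N. y ^ (N - Suc j) * x ^ Suc j) =
    (if x = 0 then 0 else if y = 0 then 1 else if x = y then -1 else (0::'a))"
proof -
  consider "x = 0" | "x \<noteq> 0" "y = 0" | "x \<noteq> 0" "y \<noteq> 0"
    by blast
  then show ?thesis
  proof cases
    case 2
    have "(\<Sum>j<N. y ^ (N - Suc j) * x ^ Suc j) = (\<Sum>j<N. if j = N - 1 then x ^ Suc j else 0)"
      using 2 N_pos by (intro sum.cong) (auto simp: power_0_left simp del: power_Suc)
    also have "\<dots> = x ^ N"
      using N_pos by (simp add: sum.delta del: power_Suc)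
    finally show ?thesis
      using 2 power_N by simp
  next
    case 3
    have "y ^ (N - Suc j) * x ^ Suc j = (x / y) ^ Suc j" if "j < N" for j
    proof -
      have "y ^ (N - Suc j) * y ^ Suc j = y ^ N"
        using that by (simp flip: power_add del: power_Suc)
      then have "y ^ (N - Suc j) * y ^ Suc j = 1"
        using power_N 3 by simp
      then show ?thesis
        using 3 by (simp add: field_simps del: power_Suc)
    qed
    then have "(\<Sum>j<N. y ^ (N - Suc j) * x ^ Suc j) = (\<Sum>j<N. (x / y) ^ Suc j)"
      by simp
    also have "\<dots> = (if x / y = 1 then -1 else 0)"
      using 3 by (intro sum_power_Suc_root_of_unity) (simp add: power_divide power_N)
    finally show ?thesis
      using 3 by simp
  qed simp
qed

lemma interpolation: "c x = c 0 - (\<Sum>j<N. moment c (N - Suc j) * x ^ Suc j)"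
proof -
  have "(\<Sum>j<N. moment c (N - Suc j) * x ^ Suc j) = (\<Sum>y\<in>UNIV. c y * (\<Sum>j<N. y ^ (N - Suc j) * x ^ Suc j))"
    unfolding moment_def
    by (simp add: sum_distrib_left sum_distrib_right sum.swap[of _ "{..<N}"] mult.assoc)
  also have "\<dots> = (\<Sum>y\<in>UNIV. c y * (if x = 0 then 0 else if y = 0 then 1 else if x = y then -1 else 0))"
    by (simp only: sum_power_kernel)
  also have "\<dots> = (if x = 0 then 0 else c 0 - c x)"
  proof (cases "x = 0")
    case False
    then have "c y * (if y = 0 then 1 else if x = y then -1 else 0) =
        (if y = 0 then c y else 0) - (if y = x then c y else 0)" for y
      by auto
    with False show ?thesis
      by (simp add: sum_subtractf)
  qed simp
  finally show ?thesis
    by auto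
qed

lemma inner_product_eq_moments:
  "(\<Sum>x\<in>UNIV. c x * d x) = c 0 * moment d 0 - (\<Sum>j<N. moment c (N - Suc j) * moment d (Suc j))"
proof -
  have "(\<Sum>x\<in>UNIV. c x * d x) = (\<Sum>x\<in>UNIV. (c 0 - (\<Sum>j<N. moment c (N - Suc j) * x ^ Suc j)) * d x)"
    by (subst interpolation[of c]) simp
  also have "\<dots> = c 0 * (\<Sum>x\<in>UNIV. d x) - (\<Sum>x\<in>UNIV. (\<Sum>j<N. moment c (N - Suc j) * x ^ Suc j) * d x)"
    by (simp add: left_diff_distrib sum_subtractf sum_distrib_left)
  also have "(\<Sum>x\<in>UNIV. (\<Sum>j<N. moment c (N - Suc j) * x ^ Suc j) * d x) =
      (\<Sum>x\<in>UNIV. \<Sum>j<N. moment c (N - Suc j) * (d x * x ^ Suc j))"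
    by (simp add: sum_distrib_left sum_distrib_right mult_ac)
  also have "\<dots> = (\<Sum>j<N. \<Sum>x\<in>UNIV. moment c (N - Suc j) * (d x * x ^ Suc j))"
    by (rule sum.swap)
  also have "\<dots> = (\<Sum>j<N. moment c (N - Suc j) * moment d (Suc j))"
    by (simp add: moment_def[of d] sum_distrib_left)
  finally show ?thesis
    by (simp add: moment_def)
qed

lemma moment_code_dual_exponents_subset:
  assumes "0 \<in> T"
  shows "moment_code (dual_exponents T) \<subseteq> dual_code q (moment_code T)"
proof
  fix d assume d: "d \<in> moment_code (dual_exponents T)"
  have "(\<Sum>x\<in>UNIV. c x * d x) = 0" if c: "c \<in> moment_code T" for c
  proof -
    have c_moment: "u \<in> T \<Longrightarrow> moment c u = 0" for u
      using c by (simp add: moment_code_def)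
    have d_moment: "s \<in> dual_exponents T \<Longrightarrow> moment d s = 0" for s
      using d by (simp add: moment_code_def)
    have "(\<Sum>j<N. moment c (N - Suc j) * moment d (Suc j)) = 0"
    proof (intro sum.neutral ballI)
      fix j assume "j \<in> {..<N}"
      then show "moment c (N - Suc j) * moment d (Suc j) = 0"
        using c_moment d_moment[of "Suc j"]
        by (cases "N - Suc j \<in> T") (auto simp: dual_exponents_def)
    qed
    moreover have "c 0 * moment d 0 = 0"
    proof (cases "0 \<in> dual_exponents T")
      case False
      then have "N \<in> T"
        by (simp add: dual_exponents_def)
      then have "c 0 = 0"
        using moment_N[of c] c_moment assms by simp
      then show ?thesis
        by simp
    qed (simp add: d_moment)
    ultimately show ?thesis
      by (simp add: inner_product_eq_moments)
  qed
  then show "d \<in> dual_code q (moment_code T)"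
    using d by (auto simp: dual_code_def moment_code_def)
qed

text \<open>Multiplying \<open>k * q ^ t + u \<equiv> 0\<close> by \<open>q ^ (n - t)\<close> gives \<open>u * q ^ (n - t) \<equiv> -k (mod N)\<close>,
  so closure of \<open>T\<close> would put \<open>N - k\<close> into \<open>T\<close>.\<close>
lemma sum_powers_dual_exponent:
  assumes T_le: "T \<subseteq> {..N}" and closed: "\<And>u t. u \<in> T \<Longrightarrow> u * q ^ t mod N \<in> T"
    and u: "u \<in> T" and k: "k \<in> dual_exponents T" and t: "t < n"
  shows "(\<Sum>x\<in>UNIV. x ^ (k * q ^ t + u) :: 'a) = 0"
proof -
  have "k \<le> N" and "N - k \<notin> T"
    using k by (auto simp: dual_exponents_def)
  have "\<not> (0 < k * q ^ t + u \<and> N dvd k * q ^ t + u)"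
  proof
    assume H: "0 < k * q ^ t + u \<and> N dvd k * q ^ t + u"
    show False
    proof (cases "k = 0")
      case True
      then have "N \<le> u" and "u \<le> N"
        using H T_le u by (auto dest: dvd_imp_le)
      then show False
        using True \<open>N - k \<notin> T\<close> u by simp
    next
      case False
      have "q ^ t * q ^ (n - t) = Suc N"
        using t by (simp add: Suc_N flip: power_add)
      then have "(k * q ^ t + u) * q ^ (n - t) = (k + u * q ^ (n - t)) + N * k"
        by (simp add: algebra_simps)
      then have "N dvd k + u * q ^ (n - t)"
        using H by (metis dvd_add_left_iff dvd_mult2 dvd_triv_left)
      then have "N dvd k + u * q ^ (n - t) mod N"
        by (simp add: mod_add_right_eq dvd_eq_mod_eq_0)
      then have "u * q ^ (n - t) mod N = N - k"
        using False \<open>k \<le> N\<close> N_pos by (intro dvd_add_imp_eq_diff) simp_all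
      then show False
        using closed[OF u, of "n - t"] \<open>N - k \<notin> T\<close> by argo
    qed
  qed
  then show ?thesis
    by (simp add: sum_powers)
qed

lemma moment_trace_monomial:
  "moment (\<lambda>x. trace (a * x ^ k)) u = (\<Sum>t<n. a ^ (q ^ t) * (\<Sum>x\<in>UNIV. x ^ (k * q ^ t + u)))"
  unfolding moment_def trace_def
  by (simp add: sum_distrib_left sum_distrib_right sum.swap[of _ "{..<n}"]
      power_mult_distrib power_add power_mult mult_ac)

lemma inner_product_trace_monomial:
  assumes "d \<in> words q"
  shows "(\<Sum>x\<in>UNIV. trace (a * x ^ k) * d x) = trace (a * moment d k)"
proof -
  have "d x ^ (q ^ t) = d x" for x t
    using assms Fq_power by (auto simp: words_def)
  then have "(\<Sum>x\<in>UNIV. trace (a * x ^ k) * d x) = (\<Sum>t<n. \<Sum>x\<in>UNIV. (a * x ^ k * d x) ^ (q ^ t))"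
    by (simp add: trace_def sum_distrib_right sum.swap[of _ "{..<n}"] power_mult_distrib)
  also have "\<dots> = (\<Sum>t<n. (\<Sum>x\<in>UNIV. a * x ^ k * d x) ^ (q ^ t))"
    by (simp add: power_q_power_sum)
  also have "(\<Sum>x\<in>UNIV. a * x ^ k * d x) = a * moment d k"
    by (simp add: moment_def sum_distrib_left mult_ac)
  finally show ?thesis
    by (simp add: trace_def)
qed

lemma trace_monomial_in_moment_code:
  assumes T_le: "T \<subseteq> {..N}" and closed: "\<And>u t. u \<in> T \<Longrightarrow> u * q ^ t mod N \<in> T"
    and k: "k \<in> dual_exponents T"
  shows "(\<lambda>x. trace (a * x ^ k)) \<in> moment_code T"
proof -
  have "moment (\<lambda>x. trace (a * x ^ k)) u = 0" if u: "u \<in> T" for u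
    unfolding moment_trace_monomial using sum_powers_dual_exponent[OF T_le closed u k] by simp
  then show ?thesis
    by (simp add: moment_code_def words_def trace_in_Fq)
qed

lemma dual_code_subset_moment_code_dual_exponents:
  assumes T_le: "T \<subseteq> {..N}" and closed: "\<And>u t. u \<in> T \<Longrightarrow> u * q ^ t mod N \<in> T"
  shows "dual_code q (moment_code T) \<subseteq> moment_code (dual_exponents T)"
proof
  fix d assume d: "d \<in> dual_code q (moment_code T)"
  then have "d \<in> words q"
    by (simp add: dual_code_def)
  have "moment d k = 0" if k: "k \<in> dual_exponents T" for k
  proof (rule ccontr)
    assume nonzero: "moment d k \<noteq> 0"
    obtain y where y: "trace y \<noteq> 0"
      using trace_nonzero by blast
    define a where "a = y / moment d k"
    have "(\<lambda>x. trace (a * x ^ k)) \<in> moment_code T"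
      by (rule trace_monomial_in_moment_code[OF T_le closed k])
    then have "(\<Sum>x\<in>UNIV. trace (a * x ^ k) * d x) = 0"
      using d by (simp add: dual_code_def)
    moreover have "(\<Sum>x\<in>UNIV. trace (a * x ^ k) * d x) = trace (a * moment d k)"
      by (rule inner_product_trace_monomial[OF \<open>d \<in> words q\<close>])
    moreover have "a * moment d k = y"
      using nonzero by (simp add: a_def)
    ultimately show False
      using y by simp
  qed
  then show "d \<in> moment_code (dual_exponents T)"
    using \<open>d \<in> words q\<close> by (simp add: moment_code_def)
qed

theorem dual_moment_code:
  assumes "T \<subseteq> {..N}" and "0 \<in> T" and "\<And>u t. u \<in> T \<Longrightarrow> u * q ^ t mod N \<in> T"
  shows "dual_code q (moment_code T) = moment_code (dual_exponents T)"
  using dual_code_subset_moment_code_dual_exponents[OF assms(1,3)]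
    moment_code_dual_exponents_subset[OF assms(2)] by blast

section \<open>The codes \<open>C_q(r, I, n)\<close>\<close>

lemma wtq_N: "wtq q n N = n * (q - 1)"
  unfolding N_def by (rule wtq_max[OF q_pos])

definition zero_exponents :: "nat \<Rightarrow> nat \<Rightarrow> nat set \<Rightarrow> nat set" where
  "zero_exponents m r I = {u. 0 < u \<and> u \<le> N \<and> (wtq q n u + r < n * (q - 1) \<or>
      (wtq q n u + r = n * (q - 1) \<and> digit_imbalance q n u \<in> Mset q m r - I))}"

lemma ZrI_eq_image_zero_exponents:
  assumes "r < n * (q - 1)"
  shows "ZrI q m n \<alpha> r I = (\<lambda>u. \<alpha> ^ u) ` zero_exponents m r I"
proof -
  have imbalance: "\<bar>int (Osum q n u) - int (Esum q n u)\<bar> = int k \<longleftrightarrow> digit_imbalance q n u = k" for u k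
    by (auto simp: digit_imbalance_def)
  have "0 < u" if "wtq q n u + r = n * (q - 1)" for u
    using that assms by (cases "u = 0") auto
  then show ?thesis
    unfolding ZrI_def Zset_def Theta_def zero_exponents_def N_def imbalance
    by (auto simp: Suc_le_eq)
qed

lemma Ccode_eq_moment_code:
  assumes "n = 2 * m" and "r < n * (q - 1)"
  shows "Ccode q m \<alpha> r I = moment_code (insert 0 (zero_exponents m r I))"
proof -
  have "\<forall>u\<in>zero_exponents m r I. 0 < u"
    by (simp add: zero_exponents_def)
  then show ?thesis
    using assms(2) unfolding Ccode_def Let_def assms(1)[symmetric]
    by (simp add: ZrI_eq_image_zero_exponents ext_cyclic_eq_moment_code)
qed

lemma Ccode_eq_moment_code_top:
  assumes "n = 2 * m"
  shows "Ccode q m \<alpha> (n * (q - 1)) J = moment_code (if 0 \<in> J then {} else {0})"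
proof -
  have "\<not> (0 < u \<and> u \<le> q ^ n - 1 \<and> wtq q n u = 0)" for u
  proof
    assume u: "0 < u \<and> u \<le> q ^ n - 1 \<and> wtq q n u = 0"
    then have "u < q ^ n"
      using Suc_N by (simp add: N_def)
    then show False
      using u wtq_eq_0_iff[OF q_pos] by blast
  qed
  then have empty: "{\<alpha> ^ u | u. 0 < u \<and> u \<le> q ^ n - 1 \<and>
      int (wtq q n u) \<le> int (n * (q - 1)) - (int (n * (q - 1)) - 1) - 1} = (\<lambda>u. \<alpha> ^ u) ` {}"
    by auto
  have "GRM q n \<alpha> (int (n * (q - 1)) - 1) = ext_cyclic q n \<alpha> ((\<lambda>u. \<alpha> ^ u) ` {})"
    unfolding GRM_def empty by simp
  also have "\<dots> = moment_code {0}"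
    by (rule ext_cyclic_eq_moment_code) simp
  moreover have "words q = moment_code {}"
    by (simp add: moment_code_def)
  ultimately show ?thesis
    unfolding Ccode_def Let_def assms[symmetric] by simp
qed

lemma zero_exponents_closed:
  assumes n: "n = 2 * m" and u: "u \<in> insert 0 (zero_exponents m r I)"
  shows "u * q ^ t mod N \<in> insert 0 (zero_exponents m r I)"
proof (cases "u * q ^ t mod N = 0")
  case False
  have "u \<noteq> 0" and "u \<noteq> N"
    using False by (intro notI; simp)+
  then have "u < q ^ n - 1"
    using u by (auto simp: zero_exponents_def N_def)
  then have v: "u * q ^ t mod N = (qrot q n ^^ t) u"
    unfolding N_def using q_gt_1 n_pos by (intro mult_power_mod_eq_qrot_funpow) auto
  have "0 < m"
    using n n_pos by simp
  have "u * q ^ t mod N < N"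
    using N_pos by simp
  then show ?thesis
    using u \<open>u \<noteq> 0\<close> unfolding v
    by (auto simp: zero_exponents_def wtq_qrot_funpow[OF q_pos n_pos]
        digit_imbalance_qrot_funpow[OF q_pos \<open>0 < m\<close>, folded n])
qed simp

lemma N_minus_mem_zero_exponents:
  assumes n: "n = 2 * m" and s: "0 < s" "s < N"
  shows "N - s \<in> zero_exponents m r I \<longleftrightarrow>
    r < wtq q n s \<or> (wtq q n s = r \<and> digit_imbalance q n s \<in> Mset q m r - I)"
proof -
  have s_le: "s \<le> q ^ n - 1"
    using s by (simp add: N_def)
  have "wtq q n (N - s) = n * (q - 1) - wtq q n s"
    unfolding N_def by (rule wtq_complement[OF q_pos s_le])
  moreover have "digit_imbalance q n (N - s) = digit_imbalance q n s"
    unfolding N_def unfolding n by (rule digit_imbalance_complement[OF q_pos s_le[unfolded n]])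
  moreover have "wtq q n s \<le> n * (q - 1)"
    by (rule wtq_le[OF q_pos])
  ultimately show ?thesis
    using s by (auto simp: zero_exponents_def)
qed

lemma dual_exponents_zero_exponents:
  assumes n: "n = 2 * m" and r: "0 < r" "r < n * (q - 1)" and I: "I \<subseteq> Mset q m r"
  shows "dual_exponents (insert 0 (zero_exponents m r I)) =
    insert 0 (zero_exponents m (n * (q - 1) - r) (Mset q m r - I))"
proof -
  let ?K = "n * (q - 1)"
  have "s \<in> dual_exponents (insert 0 (zero_exponents m r I)) \<longleftrightarrow>
      s \<in> insert 0 (zero_exponents m (?K - r) (Mset q m r - I))" if s: "0 < s" "s < N" for s
  proof -
    let ?w = "wtq q n s" and ?d = "digit_imbalance q n s"
    have "?w \<le> ?K"
      by (rule wtq_le[OF q_pos])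
    have "?w = r \<Longrightarrow> ?d \<in> Mset q m r"
      using digit_imbalance_in_Mset[OF q_pos, of m s] by (simp add: n)
    then have "s \<in> dual_exponents (insert 0 (zero_exponents m r I)) \<longleftrightarrow> ?w < r \<or> (?w = r \<and> ?d \<in> I)"
      using s N_minus_mem_zero_exponents[OF n s, of r I] by (auto simp: dual_exponents_def)
    moreover have "Mset q m (?K - r) = Mset q m r"
      using Mset_complement[of r m q] r unfolding n by simp
    then have "s \<in> zero_exponents m (?K - r) (Mset q m r - I) \<longleftrightarrow> ?w < r \<or> (?w = r \<and> ?d \<in> I)"
      using s r I \<open>?w \<le> ?K\<close> by (auto simp: zero_exponents_def N_def)
    ultimately show ?thesis
      using s by simp
  qed
  moreover have "N \<notin> zero_exponents m r I" and "N \<notin> zero_exponents m (?K - r) J" for J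
    using r by (auto simp: zero_exponents_def wtq_N)
  moreover have bounds: "0 < s \<and> s \<le> N" if "s \<in> zero_exponents m r' J" for s r' J
    using that by (simp add: zero_exponents_def)
  ultimately have "s \<in> dual_exponents (insert 0 (zero_exponents m r I)) \<longleftrightarrow>
      s \<in> insert 0 (zero_exponents m (?K - r) (Mset q m r - I))" for s
    using N_pos by (cases "0 < s \<and> s < N"; cases "s = N") (auto simp: dual_exponents_def dest: bounds)
  then show ?thesis
    by blast
qed

lemma dual_exponents_zero_exponents_0:
  assumes n: "n = 2 * m"
  shows "dual_exponents (insert 0 (zero_exponents m 0 I)) = (if 0 \<in> Mset q m 0 - I then {} else {0})"
proof -
  have "N - s \<in> zero_exponents m 0 I" if s: "0 < s" "s < N" for s
  proof -
    have "s < q ^ n"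
      using s by (simp add: N_def)
    then have "0 < wtq q n s"
      using s wtq_eq_0_iff[OF q_pos] by blast
    then show ?thesis
      using N_minus_mem_zero_exponents[OF n s] by simp
  qed
  moreover have "digit_imbalance q n N = 0"
    unfolding N_def unfolding n by (rule digit_imbalance_max[OF q_pos])
  then have "N \<in> zero_exponents m 0 I \<longleftrightarrow> 0 \<in> Mset q m 0 - I"
    using N_pos by (simp add: zero_exponents_def wtq_N)
  ultimately have "s \<in> dual_exponents (insert 0 (zero_exponents m 0 I)) \<longleftrightarrow> s = 0 \<and> 0 \<notin> Mset q m 0 - I"
    for s
    unfolding dual_exponents_def using N_pos by (cases "s = 0 \<or> s = N") auto
  then show ?thesis
    by auto
qed

theorem dual_Ccode:
  assumes n: "n = 2 * m" and r: "r < n * (q - 1)" and I: "I \<subseteq> Mset q m r"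
  shows "dual_code q (Ccode q m \<alpha> r I) = Ccode q m \<alpha> (n * (q - 1) - r) (Mset q m r - I)"
proof -
  have "dual_code q (Ccode q m \<alpha> r I) = moment_code (dual_exponents (insert 0 (zero_exponents m r I)))"
    unfolding Ccode_eq_moment_code[OF n r]
  proof (rule dual_moment_code)
    show "insert 0 (zero_exponents m r I) \<subseteq> {..N}"
      by (auto simp: zero_exponents_def)
    show "u * q ^ t mod N \<in> insert 0 (zero_exponents m r I)"
      if "u \<in> insert 0 (zero_exponents m r I)" for u t
      using that by (rule zero_exponents_closed[OF n])
  qed simp
  also have "\<dots> = Ccode q m \<alpha> (n * (q - 1) - r) (Mset q m r - I)"
  proof (cases "r = 0")
    case True
    then show ?thesis
      unfolding True dual_exponents_zero_exponents_0[OF n] diff_zero Ccode_eq_moment_code_top[OF n] by simp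
  next
    case False
    then have "0 < r" and "n * (q - 1) - r < n * (q - 1)"
      using r by simp_all
    then show ?thesis
      unfolding dual_exponents_zero_exponents[OF n \<open>0 < r\<close> r I] by (simp add: Ccode_eq_moment_code[OF n])
  qed
  finally show ?thesis .
qed

end

theorem theorem4p1:
  fixes p l q m n r :: nat and I :: "nat set" and \<alpha> :: "'a::{field,finite}"
  assumes "prime p" and "l \<ge> 1" and "q = p ^ l"
    and "m \<ge> 1" and "n = 2 * m"
    and "card (UNIV :: 'a set) = q ^ n"
    and "primitive_elem \<alpha>"
    and "r < n * (q - 1)"
    and "I \<subseteq> Mset q m r"
  shows "dual_code q (Ccode q m \<alpha> r I) = Ccode q m \<alpha> (n * (q - 1) - r) (Mset q m r - I)"
proof -
  have "CHAR('a) = p"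
    using assms(1-6) by (intro CHAR_eq_of_card_prime_power[of p "l * n"]) (simp_all add: power_mult)
  have "2 \<le> q"
    using prime_ge_2_nat[OF assms(1)] self_le_power[of p l] assms(2,3) by simp
  then have "2 * 2 \<le> q * q"
    by (intro mult_le_mono)
  also have "q * q \<le> q ^ n"
    using power_increasing[of 2 n q] \<open>2 \<le> q\<close> assms(4,5) by (simp add: power2_eq_square)
  finally have "2 * 2 \<le> q ^ n" .
  then have "\<alpha> \<noteq> 0"
    using assms(6,7) by (intro primitive_elem_nonzero) simp_all
  interpret primitive_extension q n \<alpha>
  proof
    show "\<exists>l>0. q = CHAR('a) ^ l"
      using assms(2,3) \<open>CHAR('a) = p\<close> by (intro exI[of _ l]) simp
  qed (use assms \<open>\<alpha> \<noteq> 0\<close> in simp_all)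
  show ?thesis
    using assms(5,8,9) by (rule dual_Ccode)
qed

end
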